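(* Let $m,n$ be positive integers and $f\in L^1(\mathbb{T})$ with Fourier coefficients $d(k)$, $k\in\mathbb{Z}$. Then $$D^{[4m]}_n(f)=\mathrm{Pf}^{[2m]}\Big(\prod_{s=1}^m(i_{2s}-i_{2s-1})\cdot d\big((2n+1)m-i_1-i_2-\cdots-i_{2m}\big)\Big)_{1\le i_1,\dots,i_{2m}\le 2n}.$$ In particular $D^{[4]}_n(f)=\mathrm{pf}\big((j-i)\,d(2n+1-i-j)\big)_{1\le i,j\le 2n}$.
   Context: $\mathbb{T}$ is the unit circle with normalized Haar measure, $d(k)=\int_{\mathbb{T}}f(z)z^{-k}\mathrm{d}z$. Toeplitz hyperdeterminant: $D^{[2p]}_n(f)=\mathrm{Det}^{[2p]}\big(d(i_1+\cdots+i_p-i_{p+1}-\cdots-i_{2p})\big)_{1\le i_1,\dots,i_{2p}\le n}$, with $\mathrm{Det}^{[2p]}(A):=\frac{1}{n!}\sum_{\sigma_1,\dots,\sigma_{2p}\in\mathfrak{S}_n}\prod_j\mathrm{sgn}(\sigma_j)\prod_{i=1}^nA(\sigma_1(i),\dots,\sigma_{2p}(i))$. Hyperpfaffian of an array $B$ indexed by $\{1,\dots,2n\}^{2m}$ that changes sign when $i_{2s-1},i_{2s}$ are interchanged (each $s$): with $\mathfrak{E}_{2n}=\{\sigma\in\mathfrak{S}_{2n}:\sigma(2i-1)<\sigma(2i)\}$, $\mathrm{Pf}^{[2m]}(B):=\frac{1}{n!}\sum_{\sigma_1,\dots,\sigma_m\in\mathfrak{E}_{2n}}\prod_s\mathrm{sgn}(\sigma_s)\prod_{i=1}^nB(\sigma_1(2i-1),\sigma_1(2i),\dots,\sigma_m(2i-1),\sigma_m(2i))$;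 $\mathrm{pf}$ is the ordinary Pfaffian. *)

theory Defs
  imports "HOL-Analysis.Analysis" "HOL-Combinatorics.Permutations"
begin

definition fourier_coeff :: "(complex \<Rightarrow> complex) \<Rightarrow> int \<Rightarrow> complex" where
  "fourier_coeff f k = complex_of_real (1 / (2 * pi)) *
     integral {0..2*pi} (\<lambda>t. f (cis t) * cis (- (real_of_int k) * t))"

definition L1_circle :: "(complex \<Rightarrow> complex) \<Rightarrow> bool" where
  "L1_circle f \<longleftrightarrow> (\<lambda>t. f (cis t)) absolutely_integrable_on {0..2*pi}"

text \<open>Hyperdeterminant of order q (q = 2p) of an array A indexed by tuples
  (represented as functions from positions 0..<q to {1..n}).\<close>
definition hyperdet :: "nat \<Rightarrow> nat \<Rightarrow> ((nat \<Rightarrow> nat) \<Rightarrow> complex) \<Rightarrow> complex" where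
  "hyperdet q n A = (1 / of_nat (fact n)) *
     (\<Sum>\<sigma> \<in> PiE {0..<q} (\<lambda>_. {\<pi>. \<pi> permutes {1..n}}).
        (\<Prod>j<q. of_int (sign (\<sigma> j))) *
        (\<Prod>i\<in>{1..n}. A (\<lambda>j. \<sigma> j i)))"

definition toeplitz_hyperdet :: "nat \<Rightarrow> nat \<Rightarrow> (int \<Rightarrow> complex) \<Rightarrow> complex" where
  "toeplitz_hyperdet p n d = hyperdet (2*p) n
     (\<lambda>idx. d ((\<Sum>j<p. int (idx j)) - (\<Sum>j\<in>{p..<2*p}. int (idx j))))"

definition E_perms :: "nat \<Rightarrow> (nat \<Rightarrow> nat) set" where
  "E_perms n = {\<sigma>. \<sigma> permutes {1..2*n} \<and> (\<forall>i\<in>{1..n}. \<sigma> (2*i-1) < \<sigma> (2*i))}"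

text \<open>Hyperpfaffian Pf^{[2m]} of an array B indexed by {1..2n}^{2m}; tuple position
  2s (resp. 2s+1), s<m, corresponds to i_{2s+1} (resp. i_{2s+2}).\<close>
definition hyperpf :: "nat \<Rightarrow> nat \<Rightarrow> ((nat \<Rightarrow> nat) \<Rightarrow> complex) \<Rightarrow> complex" where
  "hyperpf m n B = (1 / of_nat (fact n)) *
     (\<Sum>\<sigma> \<in> PiE {0..<m} (\<lambda>_. E_perms n).
        (\<Prod>s<m. of_int (sign (\<sigma> s))) *
        (\<Prod>i\<in>{1..n}. B (\<lambda>j. if even j then \<sigma> (j div 2) (2*i-1) else \<sigma> (j div 2) (2*i))))"

definition pfaffian :: "nat \<Rightarrow> (nat \<Rightarrow> nat \<Rightarrow> complex) \<Rightarrow> complex" where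
  "pfaffian n a = (1 / (of_nat (2^n * fact n))) *
     (\<Sum>\<sigma> | \<sigma> permutes {1..2*n}. of_int (sign \<sigma>) *
        (\<Prod>i\<in>{1..n}. a (\<sigma> (2*i-1)) (\<sigma> (2*i))))"

end

theory Submission
  imports Defs "HOL-Library.Poly_Mapping" "Jordan_Normal_Form.Determinant"
begin

text \<open>
  Let L be the linear functional on Laurent polynomials in x_1, ..., x_n that sends x^k to
  d(k_1) ... d(k_n) (the integral of P(1/z) f(z_1) ... f(z_n) over the torus, though only this
  algebraic description is used). Expanding the definitions, D_n^[2p](f) = L(W^p W'^p) / n!
  for the alternant W = \<Sum>_\<tau> sgn \<tau> \<Prod>_i x_i^\<tau>(i) and W' = W(1/x), while the hyperpfaffian of
  the theorem is L(G^m) / n! for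
  G = \<Sum>_{\<sigma> \<in> E} sgn \<sigma> \<Prod>_i (\<sigma>(2i) - \<sigma>(2i-1)) x_i^(2n+1-\<sigma>(2i-1)-\<sigma>(2i)).
  So everything reduces to the polynomial identity W^2 W'^2 = G.

  With u_i = 1/x_i both sides equal \<Prod>_i x_i^(2n-2) \<Delta>(u)^4. On the left this follows from
  W = \<Prod>_i x_i \<Delta>(x) and x_j - x_i = x_i x_j (u_i - u_j). On the right it is the confluent
  Vandermonde identity
  \<Sum>_{\<sigma> \<in> E} sgn \<sigma> \<Prod>_i (\<sigma>(2i) - \<sigma>(2i-1)) u_i^(\<sigma>(2i-1)+\<sigma>(2i)-1) = \<Prod>_i u_i^2 \<Delta>(u)^4,
  which comes from the Vandermonde determinant in the 2n variables u_1, v_1, ..., u_n, v_n: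
  antisymmetrise over each pair of columns, divide by \<Prod>_i (v_i - u_i) and let v_i coalesce
  with u_i. Finally, for an antisymmetric matrix the hyperpfaffian Pf^[2] is the Pfaffian,
  which gives the case m = 1.
\<close>

section \<open>Vandermonde determinants\<close>

definition vandermonde_mat :: "nat \<Rightarrow> (nat \<Rightarrow> 'a::comm_ring_1) \<Rightarrow> 'a mat" where
  "vandermonde_mat N y = mat N N (\<lambda>(i, j). y i ^ j)"

definition vandermonde :: "nat \<Rightarrow> (nat \<Rightarrow> 'a::comm_ring_1) \<Rightarrow> 'a" where
  "vandermonde N y = (\<Prod>j<N. \<Prod>i<j. y j - y i)"

lemma vandermonde_Suc:
  "vandermonde (Suc M) y = (\<Prod>i<M. y (Suc i) - y 0) * vandermonde M (\<lambda>i. y (Suc i))"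
proof -
  have "vandermonde (Suc M) y = (\<Prod>j<M. \<Prod>i<Suc j. y (Suc j) - y i)"
    unfolding vandermonde_def by (subst prod.lessThan_Suc_shift) simp
  also have "\<dots> = (\<Prod>j<M. (y (Suc j) - y 0) * (\<Prod>i<j. y (Suc j) - y (Suc i)))"
    by (intro prod.cong refl) (rule prod.lessThan_Suc_shift)
  finally show ?thesis
    by (simp add: vandermonde_def prod.distrib)
qed

lemma det_upper_triangular_mat:
  assumes "\<And>i j. j < i \<Longrightarrow> i < N \<Longrightarrow> f (i, j) = 0"
  shows "det (mat N N f) = (\<Prod>i<N. f (i, i))"
proof -
  have "det (mat N N f) = prod_list (diag_mat (mat N N f))"
    using assms by (intro det_upper_triangular) (auto simp: upper_triangular_def)
  also have "\<dots> = (\<Prod>i<N. f (i, i))"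
    unfolding prod_list_diag_prod by (simp add: atLeast0LessThan)
  finally show ?thesis .
qed

text \<open>Subtracting \<open>y 0\<close> times column \<open>j - 1\<close> from column \<open>j\<close> clears the first row
  and leaves the factor \<open>y i - y 0\<close> in row \<open>i\<close>.\<close>
lemma vandermonde_mat_column_op:
  "vandermonde_mat (Suc M) y *
     mat (Suc M) (Suc M) (\<lambda>(i, j). if i = j then 1 else if j = Suc i then - y 0 else 0) =
   mat (Suc M) (Suc M) (\<lambda>(i, j). if j = 0 then 1 else y i ^ (j - 1) * (y i - y 0))"
  (is "_ * ?T = ?B")
proof (rule eq_matI)
  fix i j assume i: "i < dim_row ?B" and j: "j < dim_col ?B"
  have "(vandermonde_mat (Suc M) y * ?T) $$ (i, j) =
      (\<Sum>k<Suc M. (if k = j then y i ^ k else 0) + (if Suc k = j then - y 0 * y i ^ k else 0))"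
    using i j by (auto simp: vandermonde_mat_def scalar_prod_def atLeast0LessThan intro!: sum.cong)
  also have "\<dots> = ?B $$ (i, j)"
  proof (cases j)
    case (Suc j')
    with j have "j' < M"
      by simp
    with i Suc show ?thesis
      by (cases "Suc j' < M") (auto simp: sum.distrib algebra_simps not_less_eq less_Suc_eq)
  qed (use i in simp)
  finally show "(vandermonde_mat (Suc M) y * ?T) $$ (i, j) = ?B $$ (i, j)" .
qed (auto simp: vandermonde_mat_def)

lemma det_vandermonde_mat_Suc:
  "det (vandermonde_mat (Suc M) y) =
     (\<Prod>i<M. y (Suc i) - y 0) * det (vandermonde_mat M (\<lambda>i. y (Suc i)))"
proof -
  define T where
    "T = mat (Suc M) (Suc M) (\<lambda>(i, j). if i = j then 1 else if j = Suc i then - y 0 else 0)"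
  define B where
    "B = mat (Suc M) (Suc M) (\<lambda>(i, j). if j = 0 then 1 else y i ^ (j - 1) * (y i - y 0))"
  define D where "D = mat M M (\<lambda>(i, j). if i = j then y (Suc i) - y 0 else 0)"
  have "det T = 1"
    unfolding T_def by (subst det_upper_triangular_mat) auto
  then have "det (vandermonde_mat (Suc M) y) = det B"
    using det_mult[of "vandermonde_mat (Suc M) y" "Suc M" T] vandermonde_mat_column_op[of M y]
    by (simp add: T_def B_def vandermonde_mat_def)
  also have "det B = (\<Sum>j<Suc M. B $$ (0, j) * cofactor B 0 j)"
    by (rule laplace_expansion_row) (auto simp: B_def)
  also have "\<dots> = det (mat_delete B 0 0)"
    by (subst sum.lessThan_Suc_shift) (simp add: B_def cofactor_def)
  also have "mat_delete B 0 0 = D * vandermonde_mat M (\<lambda>i. y (Suc i))"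
  proof (rule eq_matI)
    fix i j assume i: "i < dim_row (D * vandermonde_mat M (\<lambda>i. y (Suc i)))"
      and j: "j < dim_col (D * vandermonde_mat M (\<lambda>i. y (Suc i)))"
    have "mat_delete B 0 0 $$ (i, j) = (\<Sum>k<M. if k = i then (y (Suc i) - y 0) * y (Suc i) ^ j else 0)"
      using i j by (simp add: mat_delete_def B_def D_def vandermonde_mat_def mult.commute)
    also have "\<dots> = (\<Sum>k<M. (if i = k then y (Suc i) - y 0 else 0) * y (Suc k) ^ j)"
      by (intro sum.cong) auto
    also have "\<dots> = (D * vandermonde_mat M (\<lambda>i. y (Suc i))) $$ (i, j)"
      using i j by (simp add: D_def vandermonde_mat_def scalar_prod_def atLeast0LessThan)
    finally show "mat_delete B 0 0 $$ (i, j) = (D * vandermonde_mat M (\<lambda>i. y (Suc i))) $$ (i, j)" .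
  qed (auto simp: mat_delete_def B_def D_def vandermonde_mat_def)
  also have "det \<dots> = det D * det (vandermonde_mat M (\<lambda>i. y (Suc i)))"
    by (rule det_mult) (auto simp: D_def vandermonde_mat_def)
  also have "det D = (\<Prod>i<M. y (Suc i) - y 0)"
    unfolding D_def by (subst det_upper_triangular_mat) auto
  finally show ?thesis .
qed

lemma det_vandermonde_mat: "det (vandermonde_mat N y) = vandermonde N y"
proof (induction N arbitrary: y)
  case 0
  show ?case
    by (simp add: vandermonde_mat_def vandermonde_def)
next
  case (Suc M)
  then show ?case
    by (simp add: det_vandermonde_mat_Suc vandermonde_Suc)
qed

lemma sum_permutes_vandermonde:
  "(\<Sum>p | p permutes {..<N}. of_int (sign p) * (\<Prod>i<N. y i ^ p i)) = vandermonde N y"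
proof -
  have "vandermonde N y =
      (\<Sum>p | p permutes {0..<N}. signof p * (\<Prod>i = 0..<N. vandermonde_mat N y $$ (i, p i)))"
    unfolding det_vandermonde_mat[symmetric] by (rule det_def') (simp add: vandermonde_mat_def)
  also have "\<dots> = (\<Sum>p | p permutes {..<N}. of_int (sign p) * (\<Prod>i<N. y i ^ p i))"
    by (auto simp: vandermonde_mat_def atLeast0LessThan permutes_in_image intro!: sum.cong prod.cong)
  finally show ?thesis ..
qed

lemma sum_permutes_bij_betw:
  fixes H :: "('b \<Rightarrow> 'b) \<Rightarrow> 'c::comm_ring_1"
  assumes bij: "bij_betw f A B" and inv: "\<And>x. x \<in> A \<Longrightarrow> f' (f x) = x" and fin: "finite A"
  shows "(\<Sum>q | q permutes B. of_int (sign q) * H q) =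
         (\<Sum>p | p permutes A. of_int (sign p) * H (\<lambda>y. if y \<in> B then f (p (f' y)) else y))"
proof -
  have inv': "f (f' y) = y" if "y \<in> B" for y
    using bij inv that by (auto simp: bij_betw_def)
  have bij': "bij_betw f' B A"
    using bij inv inv' by (intro bij_betw_byWitness) (auto simp: bij_betw_def)
  define to_A where "to_A q = (\<lambda>x. if x \<in> A then f' (q (f x)) else x)" for q
  define to_B where "to_B p = (\<lambda>y. if y \<in> B then f (p (f' y)) else y)" for p
  have to_A: "to_A q permutes A" "sign (to_A q) = sign q" if "q permutes B" for q
  proof -
    interpret permutes_bij_finite q B A f' f "to_A q"
      using that bij bij' inv' fin bij_betw_finite
      by unfold_locales (auto simp: to_A_def)
    show "to_A q permutes A" "sign (to_A q) = sign q"
      by (fact permutes_p' sign_p')+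
  qed
  have to_B: "to_B p permutes B" "sign (to_B p) = sign p" if "p permutes A" for p
  proof -
    interpret permutes_bij_finite p A B f f' "to_B p"
      using that bij inv fin by unfold_locales (auto simp: to_B_def)
    show "to_B p permutes B" "sign (to_B p) = sign p"
      by (fact permutes_p' sign_p')+
  qed
  show ?thesis
  proof (rule sum.reindex_bij_witness[of _ to_B to_A], unfold mem_Collect_eq)
    fix q assume q: "q permutes B"
    show "to_B (to_A q) = q"
      using q bij bij' inv'
      by (auto simp: fun_eq_iff to_A_def to_B_def bij_betw_def permutes_not_in
                     permutes_in_image[OF q])
    then show "of_int (sign (to_A q)) * H (\<lambda>y. if y \<in> B then f (to_A q (f' y)) else y) =
        of_int (sign q) * H q"
      using to_A[OF q] by (simp add: to_B_def)
    show "to_A q permutes A"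
      using q by (rule to_A)
  next
    fix p assume p: "p permutes A"
    show "to_A (to_B p) = p"
      using p bij inv
      by (auto simp: fun_eq_iff to_A_def to_B_def bij_betw_def permutes_not_in
                     permutes_in_image[OF p])
    show "to_B p permutes B"
      using p by (rule to_B)
  qed
qed

lemma sum_permutes_atLeast1_vandermonde:
  "(\<Sum>q | q permutes {1..N}. of_int (sign q) * (\<Prod>i\<in>{1..N}. x i ^ q i)) =
     (\<Prod>i\<in>{1..N}. x i) * vandermonde N (\<lambda>i. x (Suc i))"
proof -
  have bij: "bij_betw Suc {..<N} {1..N}"
    by (rule bij_betw_byWitness[where f' = "\<lambda>y. y - 1"]) auto
  have "(\<Sum>q | q permutes {1..N}. of_int (sign q) * (\<Prod>i\<in>{1..N}. x i ^ q i)) =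
      (\<Sum>p | p permutes {..<N}. of_int (sign p) * (\<Prod>i<N. x (Suc i) * x (Suc i) ^ p i))"
    by (subst sum_permutes_bij_betw[OF bij, of "\<lambda>y. y - 1"])
       (auto simp: prod.atLeast1_atMost_eq intro!: sum.cong)
  also have "\<dots> = (\<Prod>i<N. x (Suc i)) *
      (\<Sum>p | p permutes {..<N}. of_int (sign p) * (\<Prod>i<N. x (Suc i) ^ p i))"
    by (simp add: prod.distrib sum_distrib_left ac_simps)
  also have "\<dots> = (\<Prod>i\<in>{1..N}. x i) * vandermonde N (\<lambda>i. x (Suc i))"
    by (simp add: sum_permutes_vandermonde prod.atLeast1_atMost_eq)
  finally show ?thesis .
qed

lemma prod_lessThan_double:
  "(\<Prod>k<2*(n::nat). f k) = (\<Prod>i<n. f (2*i) * f (2*i+1) :: 'a::comm_monoid_mult)"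
  by (induction n) (simp_all add: ac_simps)

lemma prod_atLeast1_double:
  "(\<Prod>k\<in>{1..2*(n::nat)}. f k) = (\<Prod>i\<in>{1..n}. f (2*i-1) * f (2*i) :: 'a::comm_monoid_mult)"
  by (simp add: prod.atLeast1_atMost_eq prod_lessThan_double)

lemma sum_lessThan_double:
  "(\<Sum>k<2*(n::nat). f k) = (\<Sum>i<n. f (2*i) + f (2*i+1) :: 'a::comm_monoid_add)"
  by (induction n) (simp_all add: ac_simps)

lemma lessThan_double_split: "{..<2*p} = {..<p} \<union> {p..<2*(p::nat)}"
  by auto

lemma vandermonde_double:
  "vandermonde (2*n) y = (\<Prod>i<n. y (2*i+1) - y (2*i)) *
     (\<Prod>i<n. \<Prod>l<i. (y (2*i) - y (2*l)) * (y (2*i) - y (2*l+1)) *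
                        (y (2*i+1) - y (2*l)) * (y (2*i+1) - y (2*l+1)))"
proof -
  have even: "(\<Prod>l<2*i. y (2*i) - y l) = (\<Prod>l<i. (y (2*i) - y (2*l)) * (y (2*i) - y (2*l+1)))" for i
    by (rule prod_lessThan_double)
  have odd: "(\<Prod>l<2*i+1. y (2*i+1) - y l) =
      (y (2*i+1) - y (2*i)) * (\<Prod>l<i. (y (2*i+1) - y (2*l)) * (y (2*i+1) - y (2*l+1)))" for i
    using prod_lessThan_double[of "\<lambda>l. y (2*i+1) - y l" i] by (simp add: ac_simps)
  show ?thesis
    unfolding vandermonde_def prod_lessThan_double[of "\<lambda>j. \<Prod>l<j. y j - y l"] even odd
    by (simp add: prod.distrib ac_simps)
qed

lemma prod_lessThan_pairs_mult:
  "(\<Prod>j<n. \<Prod>i<j. z i * z j) = (\<Prod>i<n. z i ^ (n - 1) :: 'a::comm_monoid_mult)"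
proof (induction n)
  case (Suc n)
  have "(\<Prod>i<n. z i ^ (n - 1)) * (\<Prod>i<n. z i * z n) = (\<Prod>i<n. z i ^ (n - 1) * z i) * z n ^ n"
    by (simp add: prod.distrib ac_simps)
  also have "(\<Prod>i<n. z i ^ (n - 1) * z i) = (\<Prod>i<n. z i ^ n)"
    by (intro prod.cong refl) (simp add: power_Suc2[symmetric])
  finally show ?case
    using Suc.IH by simp
qed simp

lemma vandermonde_power2_inverse:
  fixes x u :: "nat \<Rightarrow> 'a::comm_ring_1"
  assumes inv: "\<And>i. x i * u i = 1"
  shows "vandermonde n x ^ 2 = vandermonde n u ^ 2 * (\<Prod>i<n. x i) ^ (2 * (n - 1))"
proof -
  have "x j - x i = (u i - u j) * (x i * x j)" for i j
  proof -
    have "(u i - u j) * (x i * x j) = (x i * u i) * x j - (x j * u j) * x i"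
      by (simp add: algebra_simps)
    then show ?thesis
      by (simp add: inv)
  qed
  then have "vandermonde n x = (\<Prod>j<n. \<Prod>i<j. (u i - u j) * (x i * x j))"
    by (simp add: vandermonde_def)
  also have "\<dots> = (\<Prod>j<n. \<Prod>i<j. u i - u j) * (\<Prod>j<n. \<Prod>i<j. x i * x j)"
    by (simp only: prod.distrib[symmetric])
  also have "\<dots> = (\<Prod>j<n. \<Prod>i<j. u i - u j) * (\<Prod>i<n. x i ^ (n - 1))"
    by (simp only: prod_lessThan_pairs_mult)
  finally have "vandermonde n x = (\<Prod>j<n. \<Prod>i<j. u i - u j) * (\<Prod>i<n. x i ^ (n - 1))" .
  moreover have "(\<Prod>j<n. \<Prod>i<j. u i - u j) ^ 2 = vandermonde n u ^ 2"
    by (simp add: vandermonde_def prod_power_distrib power2_commute)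
  ultimately show ?thesis
    by (simp add: power_mult_distrib prod_power_distrib) (simp add: ac_simps flip: power_mult)
qed

section \<open>Antisymmetrising over pairs of columns\<close>

definition pair_sorted_perms :: "nat \<Rightarrow> nat \<Rightarrow> (nat \<Rightarrow> nat) set" where
  "pair_sorted_perms n k = {\<pi>. \<pi> permutes {1..2*n} \<and> (\<forall>i\<in>{1..k}. \<pi> (2*i-1) < \<pi> (2*i))}"

lemma pair_sorted_perms_0: "pair_sorted_perms n 0 = {\<pi>. \<pi> permutes {1..2*n}}"
  by (simp add: pair_sorted_perms_def)

lemma pair_sorted_perms_self: "pair_sorted_perms n n = E_perms n"
  by (simp add: pair_sorted_perms_def E_perms_def)

lemma finite_pair_sorted_perms: "finite (pair_sorted_perms n k)"
  by (rule finite_subset[of _ "{\<pi>. \<pi> permutes {1..2*n}}"])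
     (auto simp: pair_sorted_perms_def finite_permutations)

lemma finite_E_perms: "finite (E_perms n)"
  using finite_pair_sorted_perms[of n n] by (simp add: pair_sorted_perms_self)

lemma pair_sorted_perms_Suc_iff:
  "\<pi> \<in> pair_sorted_perms n (Suc k) \<longleftrightarrow> \<pi> \<in> pair_sorted_perms n k \<and> \<pi> (2*k+1) < \<pi> (2*k+2)"
  by (auto simp: pair_sorted_perms_def atLeastAtMostSuc_conv)

definition pair_prod_antisym_upto ::
    "nat \<Rightarrow> nat \<Rightarrow> (nat \<Rightarrow> nat \<Rightarrow> nat \<Rightarrow> 'a::comm_ring_1) \<Rightarrow> (nat \<Rightarrow> nat) \<Rightarrow> 'a" where
  "pair_prod_antisym_upto n k g \<pi> = (\<Prod>i\<in>{1..n}.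
     if i \<le> k then g i (\<pi> (2*i-1)) (\<pi> (2*i)) - g i (\<pi> (2*i)) (\<pi> (2*i-1))
     else g i (\<pi> (2*i-1)) (\<pi> (2*i)))"

text \<open>Composing with the transposition \<open>t\<close> of the \<open>(k+1)\<close>-st pair of positions matches the
  permutations unsorted at that pair with the sorted ones, at the cost of a sign.\<close>

context
  fixes n k :: nat and t :: "nat \<Rightarrow> nat"
  assumes k: "Suc k \<le> n"
  defines "t \<equiv> Transposition.transpose (2*k+1) (2*k+2)"
begin

lemma transpose_pair_permutes: "t permutes {1..2*n}"
  unfolding t_def using k by (intro permutes_swap_id) auto

lemma transpose_pair_other:
  "i \<noteq> Suc k \<Longrightarrow> 1 \<le> i \<Longrightarrow> t (2*i-1) = 2*i-1 \<and> t (2*i) = 2*i"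
  unfolding t_def by (auto simp: Transposition.transpose_def)

lemma comp_transpose_pair_sorted_perms_iff:
  "\<pi> \<circ> t \<in> pair_sorted_perms n k \<longleftrightarrow> \<pi> \<in> pair_sorted_perms n k"
proof -
  have tt: "\<pi> \<circ> t \<circ> t = \<pi>"
    by (simp add: t_def comp_assoc)
  have "\<pi> \<circ> t permutes {1..2*n} \<longleftrightarrow> \<pi> permutes {1..2*n}"
    using permutes_compose[OF transpose_pair_permutes, of \<pi>]
          permutes_compose[OF transpose_pair_permutes, of "\<pi> \<circ> t"] tt by auto
  moreover have "(\<pi> \<circ> t) (2*i-1) = \<pi> (2*i-1) \<and> (\<pi> \<circ> t) (2*i) = \<pi> (2*i)" if "i \<in> {1..k}" for i
    using transpose_pair_other[of i] that by auto
  ultimately show ?thesis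
    by (auto simp: pair_sorted_perms_def)
qed

lemma pair_sorted_perms_Suc_split:
  "pair_sorted_perms n k = pair_sorted_perms n (Suc k) \<union> (\<lambda>\<pi>. \<pi> \<circ> t) ` pair_sorted_perms n (Suc k)"
  "pair_sorted_perms n (Suc k) \<inter> (\<lambda>\<pi>. \<pi> \<circ> t) ` pair_sorted_perms n (Suc k) = {}"
proof -
  have t: "t (2*k+1) = 2*k+2" "t (2*k+2) = 2*k+1"
    by (simp_all add: t_def)
  have swap: "\<pi> \<in> (\<lambda>\<pi>. \<pi> \<circ> t) ` pair_sorted_perms n (Suc k)"
    if "\<pi> \<in> pair_sorted_perms n k" "\<not> \<pi> (2*k+1) < \<pi> (2*k+2)" for \<pi>
  proof
    have "inj \<pi>"
      using that(1) by (auto simp: pair_sorted_perms_def intro: permutes_inj)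
    then have "\<pi> (2*k+1) \<noteq> \<pi> (2*k+2)"
      by (simp add: inj_eq)
    then show "\<pi> \<circ> t \<in> pair_sorted_perms n (Suc k)"
      using that t by (simp add: pair_sorted_perms_Suc_iff comp_transpose_pair_sorted_perms_iff)
    show "\<pi> = \<pi> \<circ> t \<circ> t"
      by (simp add: t_def comp_assoc)
  qed
  show "pair_sorted_perms n k = pair_sorted_perms n (Suc k) \<union> (\<lambda>\<pi>. \<pi> \<circ> t) ` pair_sorted_perms n (Suc k)"
  proof (intro equalityI subsetI)
    fix \<pi> assume "\<pi> \<in> pair_sorted_perms n k"
    then show "\<pi> \<in> pair_sorted_perms n (Suc k) \<union> (\<lambda>\<pi>. \<pi> \<circ> t) ` pair_sorted_perms n (Suc k)"
      using swap[of \<pi>] by (auto simp: pair_sorted_perms_Suc_iff)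
  qed (auto simp: pair_sorted_perms_Suc_iff comp_transpose_pair_sorted_perms_iff)
  show "pair_sorted_perms n (Suc k) \<inter> (\<lambda>\<pi>. \<pi> \<circ> t) ` pair_sorted_perms n (Suc k) = {}"
    using t by (auto simp: pair_sorted_perms_Suc_iff)
qed

lemma pair_prod_antisym_upto_Suc:
  fixes g :: "nat \<Rightarrow> nat \<Rightarrow> nat \<Rightarrow> 'a::comm_ring_1"
  assumes \<pi>: "\<pi> \<in> pair_sorted_perms n (Suc k)"
  shows "of_int (sign \<pi>) * pair_prod_antisym_upto n k g \<pi> +
           of_int (sign (\<pi> \<circ> t)) * pair_prod_antisym_upto n k g (\<pi> \<circ> t) =
         of_int (sign \<pi>) * pair_prod_antisym_upto n (Suc k) g \<pi>"
proof -
  have "permutation \<pi>" "permutation t"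
    using \<pi> transpose_pair_permutes
    by (auto simp: pair_sorted_perms_def intro: permutes_imp_permutation[OF finite_atLeastAtMost])
  then have sign: "sign (\<pi> \<circ> t) = - sign \<pi>"
    by (simp add: sign_compose t_def sign_swap_id)
  define Q where "Q k' \<rho> = (\<Prod>i\<in>{1..n} - {Suc k}.
      if i \<le> k' then g i (\<rho> (2*i-1)) (\<rho> (2*i)) - g i (\<rho> (2*i)) (\<rho> (2*i-1))
      else g i (\<rho> (2*i-1)) (\<rho> (2*i)))" for k' \<rho>
  have split: "pair_prod_antisym_upto n k' g \<rho> =
      (if Suc k \<le> k' then g (Suc k) (\<rho> (2*k+1)) (\<rho> (2*k+2)) - g (Suc k) (\<rho> (2*k+2)) (\<rho> (2*k+1))
       else g (Suc k) (\<rho> (2*k+1)) (\<rho> (2*k+2))) * Q k' \<rho>" for k' \<rho>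
    unfolding pair_prod_antisym_upto_def Q_def using k by (subst prod.remove[of _ "Suc k"]) auto
  have "Q k \<rho> = Q (Suc k) \<rho>" for \<rho>
    unfolding Q_def by (intro prod.cong) auto
  moreover have "Q k (\<pi> \<circ> t) = Q k \<pi>"
    unfolding Q_def using transpose_pair_other by (intro prod.cong) auto
  moreover have "t (2*k+1) = 2*k+2" "t (2*k+2) = 2*k+1"
    by (simp_all add: t_def)
  ultimately show ?thesis
    unfolding split sign by (simp add: algebra_simps)
qed

lemma sum_pair_sorted_perms_Suc:
  fixes g :: "nat \<Rightarrow> nat \<Rightarrow> nat \<Rightarrow> 'a::comm_ring_1"
  shows "(\<Sum>\<pi>\<in>pair_sorted_perms n k. of_int (sign \<pi>) * pair_prod_antisym_upto n k g \<pi>) =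
         (\<Sum>\<pi>\<in>pair_sorted_perms n (Suc k). of_int (sign \<pi>) * pair_prod_antisym_upto n (Suc k) g \<pi>)"
proof -
  define F where "F \<pi> = of_int (sign \<pi>) * pair_prod_antisym_upto n k g \<pi>" for \<pi>
  have inj: "inj_on (\<lambda>\<pi>. \<pi> \<circ> t) (pair_sorted_perms n (Suc k))"
    by (rule inj_onI) (metis comp_assoc comp_id transpose_comp_involutory t_def)
  have "(\<Sum>\<pi>\<in>pair_sorted_perms n k. F \<pi>) =
      (\<Sum>\<pi>\<in>pair_sorted_perms n (Suc k). F \<pi>) + (\<Sum>\<pi>\<in>pair_sorted_perms n (Suc k). F (\<pi> \<circ> t))"
    by (subst pair_sorted_perms_Suc_split(1), subst sum.union_disjoint)
       (simp_all add: finite_pair_sorted_perms pair_sorted_perms_Suc_split(2) sum.reindex[OF inj])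
  also have "\<dots> = (\<Sum>\<pi>\<in>pair_sorted_perms n (Suc k).
      of_int (sign \<pi>) * pair_prod_antisym_upto n (Suc k) g \<pi>)"
    by (simp add: F_def pair_prod_antisym_upto_Suc flip: sum.distrib)
  finally show ?thesis
    by (simp add: F_def)
qed

end

lemma sum_permutes_pairs_antisym:
  fixes g :: "nat \<Rightarrow> nat \<Rightarrow> nat \<Rightarrow> 'a::comm_ring_1"
  shows "(\<Sum>\<pi> | \<pi> permutes {1..2*n}. of_int (sign \<pi>) * (\<Prod>i\<in>{1..n}. g i (\<pi> (2*i-1)) (\<pi> (2*i)))) =
    (\<Sum>\<sigma>\<in>E_perms n. of_int (sign \<sigma>) *
       (\<Prod>i\<in>{1..n}. g i (\<sigma> (2*i-1)) (\<sigma> (2*i)) - g i (\<sigma> (2*i)) (\<sigma> (2*i-1))))"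
proof -
  have "k \<le> n \<Longrightarrow>
      (\<Sum>\<pi>\<in>pair_sorted_perms n 0. of_int (sign \<pi>) * pair_prod_antisym_upto n 0 g \<pi>) =
      (\<Sum>\<pi>\<in>pair_sorted_perms n k. of_int (sign \<pi>) * pair_prod_antisym_upto n k g \<pi>)" for k
    by (induction k) (simp_all add: sum_pair_sorted_perms_Suc)
  from this[of n] show ?thesis
    by (simp add: pair_sorted_perms_0 pair_sorted_perms_self pair_prod_antisym_upto_def)
qed

lemma pfaffian_eq_hyperpf_1:
  assumes antisym: "\<And>i j. a j i = - a i j"
  shows "pfaffian n a = hyperpf 1 n (\<lambda>idx. a (idx 0) (idx 1))"
proof -
  define F where "F \<sigma> = of_int (sign \<sigma>) * (\<Prod>i\<in>{1..n}. a (\<sigma> (2*i-1)) (\<sigma> (2*i)))" for \<sigma>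
  have double: "a x y - a y x = 2 * a x y" for x y
    by (simp add: antisym[of x y])
  have "(\<Sum>\<pi> | \<pi> permutes {1..2*n}. of_int (sign \<pi>) * (\<Prod>i\<in>{1..n}. a (\<pi> (2*i-1)) (\<pi> (2*i)))) =
      (\<Sum>\<sigma>\<in>E_perms n. 2 ^ n * F \<sigma>)"
    by (subst sum_permutes_pairs_antisym[where g = "\<lambda>_. a"])
       (simp add: F_def double prod.distrib mult.left_commute)
  moreover have "(\<Sum>\<sigma>\<in>E_perms n. F \<sigma>) = (\<Sum>\<sigma>\<in>PiE {0} (\<lambda>_. E_perms n). F (\<sigma> 0))"
    using prod_sum_PiE[of "{0}" "\<lambda>_. E_perms n" "\<lambda>_. F"]
    by (simp add: finite_E_perms)
  ultimately show ?thesis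
    by (simp add: pfaffian_def hyperpf_def F_def flip: sum_distrib_left sum_divide_distrib)
qed

definition power_pair_quot :: "'a::comm_ring_1 \<Rightarrow> 'a \<Rightarrow> nat \<Rightarrow> nat \<Rightarrow> 'a" where
  "power_pair_quot u v a b = u ^ a * v ^ a * (\<Sum>t<b - a. u ^ (b - a - Suc t) * v ^ t)"

lemma power_pair_antisym:
  assumes "a < b"
  shows "u ^ a * v ^ b - u ^ b * v ^ a = (v - u) * power_pair_quot u v a b"
proof -
  have "u ^ b = u ^ a * u ^ (b - a)" "v ^ b = v ^ a * v ^ (b - a)"
    using assms by (simp_all flip: power_add)
  then have "u ^ a * v ^ b - u ^ b * v ^ a = u ^ a * v ^ a * (v ^ (b - a) - u ^ (b - a))"
    by (simp add: algebra_simps)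
  then show ?thesis
    by (simp add: power_pair_quot_def power_diff_sumr2 ac_simps)
qed

lemma power_pair_quot_diag:
  assumes "a < b"
  shows "power_pair_quot u u a b = of_nat (b - a) * u ^ (a + b - 1)"
proof -
  have "(\<Sum>t<b - a. u ^ (b - a - Suc t) * u ^ t) = of_nat (b - a) * u ^ (b - a - 1)"
    by (simp flip: power_add)
  moreover have "a + b - 1 = a + a + (b - a - 1)"
    using assms by simp
  ultimately show ?thesis
    by (simp add: power_pair_quot_def power_add ac_simps)
qed

lemma (in comm_ring_hom) hom_power_pair_quot:
  "hom (power_pair_quot u v a b) = power_pair_quot (hom u) (hom v) a b"
  by (simp add: power_pair_quot_def hom_distribs)

definition paired_vandermonde :: "nat \<Rightarrow> (nat \<Rightarrow> 'a::comm_ring_1) \<Rightarrow> (nat \<Rightarrow> 'a) \<Rightarrow> 'a" where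
  "paired_vandermonde n u v = (\<Prod>i<n. \<Prod>l<i.
     (u (Suc i) - u (Suc l)) * (u (Suc i) - v (Suc l)) *
     (v (Suc i) - u (Suc l)) * (v (Suc i) - v (Suc l)))"

lemma paired_vandermonde_cong:
  assumes "\<And>i. i \<in> {1..n} \<Longrightarrow> u i = u' i" "\<And>i. i \<in> {1..n} \<Longrightarrow> v i = v' i"
  shows "paired_vandermonde n u v = paired_vandermonde n u' v'"
  unfolding paired_vandermonde_def using assms by (intro prod.cong refl) auto

lemma paired_vandermonde_diag: "paired_vandermonde n u u = vandermonde n (\<lambda>i. u (Suc i)) ^ 4"
proof -
  have "paired_vandermonde n u u = (\<Prod>i<n. \<Prod>l<i. (u (Suc i) - u (Suc l)) ^ 4)"
    by (simp add: paired_vandermonde_def power4_eq_xxxx)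
  then show ?thesis
    by (simp add: vandermonde_def prod_power_distrib)
qed

lemma (in comm_ring_hom) hom_paired_vandermonde:
  "hom (paired_vandermonde n u v) = paired_vandermonde n (\<lambda>i. hom (u i)) (\<lambda>i. hom (v i))"
  by (simp add: paired_vandermonde_def hom_distribs)

lemma sum_E_perms_power_pairs_antisym:
  fixes u v :: "nat \<Rightarrow> 'a::comm_ring_1"
  shows "(\<Sum>\<sigma>\<in>E_perms n. of_int (sign \<sigma>) * (\<Prod>i\<in>{1..n}.
            u i ^ \<sigma> (2*i-1) * v i ^ \<sigma> (2*i) - u i ^ \<sigma> (2*i) * v i ^ \<sigma> (2*i-1))) =
         (\<Prod>i\<in>{1..n}. v i - u i) * ((\<Prod>i\<in>{1..n}. u i * v i) * paired_vandermonde n u v)"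
proof -
  define y where "y k = (if odd k then u ((k + 1) div 2) else v (k div 2))" for k
  have y: "y (2*i-1) = u i" "y (2*i) = v i" if "i \<in> {1..n}" for i
    using that by (auto simp: y_def)
  have "(\<Sum>\<sigma>\<in>E_perms n. of_int (sign \<sigma>) * (\<Prod>i\<in>{1..n}.
         u i ^ \<sigma> (2*i-1) * v i ^ \<sigma> (2*i) - u i ^ \<sigma> (2*i) * v i ^ \<sigma> (2*i-1))) =
      (\<Sum>\<pi> | \<pi> permutes {1..2*n}. of_int (sign \<pi>) * (\<Prod>i\<in>{1..n}. u i ^ \<pi> (2*i-1) * v i ^ \<pi> (2*i)))"
    by (rule sum_permutes_pairs_antisym[where g = "\<lambda>i a b. u i ^ a * v i ^ b", symmetric])
  also have "\<dots> = (\<Sum>\<pi> | \<pi> permutes {1..2*n}. of_int (sign \<pi>) * (\<Prod>k\<in>{1..2*n}. y k ^ \<pi> k))"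
    by (simp only: prod_atLeast1_double y cong: prod.cong)
  also have "\<dots> = (\<Prod>k\<in>{1..2*n}. y k) * vandermonde (2*n) (\<lambda>k. y (Suc k))"
    by (rule sum_permutes_atLeast1_vandermonde)
  also have "(\<Prod>k\<in>{1..2*n}. y k) = (\<Prod>i\<in>{1..n}. u i * v i)"
    by (simp only: prod_atLeast1_double y cong: prod.cong)
  also have "y (Suc (2*i)) = u (i+1)" "y (Suc (2*i+1)) = v (i+1)" for i
    by (simp_all add: y_def)
  then have "vandermonde (2*n) (\<lambda>k. y (Suc k)) = (\<Prod>i\<in>{1..n}. v i - u i) * paired_vandermonde n u v"
    unfolding vandermonde_double by (simp add: paired_vandermonde_def prod.atLeast1_atMost_eq)
  finally show ?thesis
    by (simp add: ac_simps)
qed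

text \<open>Dividing the folded Vandermonde identity by \<open>\<Prod>i. v i - u i\<close> leaves an identity
  that still makes sense when \<open>v i = u i\<close>.\<close>
lemma sum_E_perms_power_pair_quot:
  fixes u v :: "nat \<Rightarrow> 'a::idom"
  assumes uv: "\<And>i. i \<in> {1..n} \<Longrightarrow> u i \<noteq> v i"
  shows "(\<Sum>\<sigma>\<in>E_perms n. of_int (sign \<sigma>) *
            (\<Prod>i\<in>{1..n}. power_pair_quot (u i) (v i) (\<sigma> (2*i-1)) (\<sigma> (2*i)))) =
         (\<Prod>i\<in>{1..n}. u i * v i) * paired_vandermonde n u v"
    (is "?S = ?R")
proof -
  have "(\<Prod>i\<in>{1..n}. v i - u i) * ?S =
      (\<Sum>\<sigma>\<in>E_perms n. of_int (sign \<sigma>) * (\<Prod>i\<in>{1..n}.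
         (v i - u i) * power_pair_quot (u i) (v i) (\<sigma> (2*i-1)) (\<sigma> (2*i))))"
    by (simp add: sum_distrib_left prod.distrib mult.left_commute)
  also have "\<dots> = (\<Sum>\<sigma>\<in>E_perms n. of_int (sign \<sigma>) * (\<Prod>i\<in>{1..n}.
         u i ^ \<sigma> (2*i-1) * v i ^ \<sigma> (2*i) - u i ^ \<sigma> (2*i) * v i ^ \<sigma> (2*i-1)))"
  proof (intro sum.cong refl arg_cong2[where f = "(*)"] prod.cong)
    fix \<sigma> i assume "\<sigma> \<in> E_perms n" "i \<in> {1..n}"
    then have "\<sigma> (2*i-1) < \<sigma> (2*i)"
      by (auto simp: E_perms_def)
    then show "(v i - u i) * power_pair_quot (u i) (v i) (\<sigma> (2*i-1)) (\<sigma> (2*i)) =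
        u i ^ \<sigma> (2*i-1) * v i ^ \<sigma> (2*i) - u i ^ \<sigma> (2*i) * v i ^ \<sigma> (2*i-1)"
      by (rule power_pair_antisym[symmetric])
  qed
  also have "\<dots> = (\<Prod>i\<in>{1..n}. v i - u i) * ?R"
    by (rule sum_E_perms_power_pairs_antisym)
  finally have "(\<Prod>i\<in>{1..n}. v i - u i) * ?S = (\<Prod>i\<in>{1..n}. v i - u i) * ?R" .
  moreover have "(\<Prod>i\<in>{1..n}. v i - u i) \<noteq> 0"
    using uv by (force simp: prod_zero_iff)
  ultimately show ?thesis
    by simp
qed

section \<open>Laurent polynomials\<close>

definition push_keys :: "('a \<Rightarrow> 'b) \<Rightarrow> ('a \<Rightarrow>\<^sub>0 'c::comm_monoid_add) \<Rightarrow> 'b \<Rightarrow>\<^sub>0 'c" where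
  "push_keys \<phi> P = (\<Sum>k\<in>Poly_Mapping.keys P. Poly_Mapping.single (\<phi> k) (Poly_Mapping.lookup P k))"

lemma push_keys_superset:
  assumes "finite K" "Poly_Mapping.keys P \<subseteq> K"
  shows "push_keys \<phi> P = (\<Sum>k\<in>K. Poly_Mapping.single (\<phi> k) (Poly_Mapping.lookup P k))"
  unfolding push_keys_def using assms
  by (intro sum.mono_neutral_left) (auto simp: in_keys_iff)

lemma push_keys_add: "push_keys \<phi> (P + Q) = push_keys \<phi> P + push_keys \<phi> Q"
proof -
  define K where "K = Poly_Mapping.keys P \<union> Poly_Mapping.keys Q"
  have K: "finite K" "Poly_Mapping.keys P \<subseteq> K" "Poly_Mapping.keys Q \<subseteq> K" "Poly_Mapping.keys (P + Q) \<subseteq> K"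
    using keys_add[of P Q] by (auto simp: K_def)
  show ?thesis
    by (simp add: push_keys_superset[OF K(1)] K lookup_add single_add sum.distrib)
qed

lemma push_keys_zero [simp]: "push_keys \<phi> 0 = 0"
  by (simp add: push_keys_def)

lemma push_keys_single [simp]: "push_keys \<phi> (Poly_Mapping.single k c) = Poly_Mapping.single (\<phi> k) c"
  by (cases "c = 0") (auto simp: push_keys_def)

lemma push_keys_sum: "push_keys \<phi> (sum f A) = (\<Sum>a\<in>A. push_keys \<phi> (f a))"
  by (induction A rule: infinite_finite_induct) (auto simp: push_keys_add)

lemma poly_mapping_sum_single:
  "P = (\<Sum>k\<in>Poly_Mapping.keys P. Poly_Mapping.single k (Poly_Mapping.lookup P k))"
  by (rule poly_mapping_eqI)
     (auto simp: lookup_sum lookup_single when_def in_keys_iff sum.delta' cong: sum.cong)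

lemma push_keys_mult:
  fixes P Q :: "'a::monoid_add \<Rightarrow>\<^sub>0 'c::comm_semiring_1"
  assumes add: "\<And>a b. \<phi> (a + b) = \<phi> a + \<phi> b"
  shows "push_keys \<phi> (P * Q) = push_keys \<phi> P * push_keys \<phi> Q"
proof -
  have "P * Q = (\<Sum>k\<in>Poly_Mapping.keys P. \<Sum>l\<in>Poly_Mapping.keys Q.
      Poly_Mapping.single (k + l) (Poly_Mapping.lookup P k * Poly_Mapping.lookup Q l))"
    by (subst (1) poly_mapping_sum_single[of P], subst (1) poly_mapping_sum_single[of Q])
       (simp add: sum_product mult_single)
  then have "push_keys \<phi> (P * Q) = (\<Sum>k\<in>Poly_Mapping.keys P. \<Sum>l\<in>Poly_Mapping.keys Q.
      Poly_Mapping.single (\<phi> k + \<phi> l) (Poly_Mapping.lookup P k * Poly_Mapping.lookup Q l))"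
    by (simp add: push_keys_sum add)
  also have "\<dots> = push_keys \<phi> P * push_keys \<phi> Q"
    by (simp add: push_keys_def sum_product mult_single)
  finally show ?thesis .
qed

lemma comm_ring_hom_push_keys:
  assumes "\<And>a b. \<phi> (a + b) = \<phi> a + \<phi> b" "\<phi> 0 = 0"
  shows "comm_ring_hom (push_keys \<phi> :: ('a::comm_monoid_add \<Rightarrow>\<^sub>0 'c::comm_ring_1) \<Rightarrow> _)"
  by unfold_locales (simp_all add: push_keys_add push_keys_mult assms flip: single_one)

type_synonym laurent = "(nat \<Rightarrow>\<^sub>0 int) \<Rightarrow>\<^sub>0 complex"

definition xpow :: "nat \<Rightarrow> int \<Rightarrow> laurent" where
  "xpow i z = Poly_Mapping.single (Poly_Mapping.single i z) 1"

lemma xpow_add: "xpow i (a + b) = xpow i a * xpow i b"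
  by (simp add: xpow_def mult_single single_add)

lemma xpow_0 [simp]: "xpow i 0 = 1"
  by (simp add: xpow_def)

lemma power_xpow: "xpow i z ^ k = xpow i (int k * z)"
  by (induction k) (auto simp: xpow_add algebra_simps)

lemma xpow_neq:
  assumes "i \<noteq> j" "a \<noteq> 0"
  shows "xpow i a \<noteq> xpow j b"
proof
  assume "xpow i a = xpow j b"
  then have "Poly_Mapping.keys (xpow i a) = Poly_Mapping.keys (xpow j b)"
    by simp
  then have "Poly_Mapping.lookup (Poly_Mapping.single i a) i =
      Poly_Mapping.lookup (Poly_Mapping.single j b) i"
    by (simp add: xpow_def)
  then show False
    using assms by (simp add: lookup_single)
qed

definition expvec :: "(nat \<Rightarrow> int) \<Rightarrow> nat set \<Rightarrow> nat \<Rightarrow>\<^sub>0 int" where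
  "expvec f S = (\<Sum>i\<in>S. Poly_Mapping.single i (f i))"

lemma lookup_expvec: "finite S \<Longrightarrow> Poly_Mapping.lookup (expvec f S) j = (if j \<in> S then f j else 0)"
  by (simp add: expvec_def lookup_sum lookup_single when_def sum.delta')

lemma prod_single:
  "(\<Prod>j\<in>J. Poly_Mapping.single (a j) (c j)) =
     Poly_Mapping.single (\<Sum>j\<in>J. a j) (\<Prod>j\<in>J. c j :: 'a::comm_semiring_1)"
  by (induction J rule: infinite_finite_induct) (simp_all add: mult_single)

lemma sum_single: "(\<Sum>j\<in>J. Poly_Mapping.single i (g j)) = Poly_Mapping.single i (\<Sum>j\<in>J. g j)"
  by (induction J rule: infinite_finite_induct) (simp_all add: single_add)

lemma sum_expvec: "(\<Sum>j\<in>J. expvec (f j) S) = expvec (\<lambda>i. \<Sum>j\<in>J. f j i) S"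
  unfolding expvec_def by (subst sum.swap) (simp add: sum_single)

lemma single_expvec:
  "finite S \<Longrightarrow> Poly_Mapping.single (expvec f S) (of_int c) = of_int c * (\<Prod>i\<in>S. xpow i (f i))"
  by (simp add: expvec_def xpow_def prod_single mult_single flip: single_of_int)

definition merge_vars :: "nat \<Rightarrow> laurent \<Rightarrow> laurent" where
  "merge_vars n = push_keys (push_keys (\<lambda>j. if n < j then j - n else j))"

lemma comm_ring_hom_merge_vars: "comm_ring_hom (merge_vars n)"
  unfolding merge_vars_def by (rule comm_ring_hom_push_keys) (simp_all add: push_keys_add)

lemma merge_vars_xpow: "merge_vars n (xpow i z) = xpow (if n < i then i - n else i) z"
  by (simp add: merge_vars_def xpow_def)

section \<open>The key polynomial identity\<close>

definition alternant :: "nat \<Rightarrow> int \<Rightarrow> laurent" where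
  "alternant n s = (\<Sum>\<tau> | \<tau> permutes {1..n}.
     Poly_Mapping.single (expvec (\<lambda>i. s * int (\<tau> i)) {1..n}) (of_int (sign \<tau>)))"

lemma alternant_eq_vandermonde:
  "alternant n s = (\<Prod>i\<in>{1..n}. xpow i s) * vandermonde n (\<lambda>i. xpow (Suc i) s)"
proof -
  have "alternant n s = (\<Sum>\<tau> | \<tau> permutes {1..n}. of_int (sign \<tau>) * (\<Prod>i\<in>{1..n}. xpow i s ^ \<tau> i))"
    unfolding alternant_def by (intro sum.cong refl) (simp add: single_expvec power_xpow mult.commute)
  also have "\<dots> = (\<Prod>i\<in>{1..n}. xpow i s) * vandermonde n (\<lambda>i. xpow (Suc i) s)"
    by (rule sum_permutes_atLeast1_vandermonde)
  finally show ?thesis .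
qed

definition pfaffian_poly :: "nat \<Rightarrow> laurent" where
  "pfaffian_poly n = (\<Sum>\<sigma>\<in>E_perms n.
     Poly_Mapping.single (expvec (\<lambda>i. int (2*n+1) - int (\<sigma> (2*i-1)) - int (\<sigma> (2*i))) {1..n})
       (of_int (sign \<sigma> * (\<Prod>i\<in>{1..n}. int (\<sigma> (2*i)) - int (\<sigma> (2*i-1))))))"

text \<open>The variables \<open>v i = x\<^bsub>n+i\<^esub>\<inverse>\<close> serve as independent partners of
  \<open>u i = x\<^bsub>i\<^esub>\<inverse>\<close>: the quotient identity holds for them, and \<open>merge_vars\<close>
  then makes the partners coalesce.\<close>
lemma confluent_vandermonde:
  defines "u \<equiv> \<lambda>i. xpow i (-1)"
  shows "(\<Sum>\<sigma>\<in>E_perms n. of_int (sign \<sigma>) * (\<Prod>i\<in>{1..n}.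
            of_nat (\<sigma> (2*i) - \<sigma> (2*i-1)) * u i ^ (\<sigma> (2*i-1) + \<sigma> (2*i) - 1))) =
         (\<Prod>i\<in>{1..n}. u i ^ 2) * vandermonde n (\<lambda>i. u (Suc i)) ^ 4"
proof -
  interpret merge: comm_ring_hom "merge_vars n"
    by (rule comm_ring_hom_merge_vars)
  define v where "v i = xpow (n + i) (-1)" for i
  have merge: "merge_vars n (u i) = u i" "merge_vars n (v i) = u i" if "i \<in> {1..n}" for i
    using that by (simp_all add: u_def v_def merge_vars_xpow)
  have uv: "u i \<noteq> v i" if "i \<in> {1..n}" for i
    using that by (simp add: u_def v_def xpow_neq)
  have "(\<Sum>\<sigma>\<in>E_perms n. of_int (sign \<sigma>) * (\<Prod>i\<in>{1..n}.
        of_nat (\<sigma> (2*i) - \<sigma> (2*i-1)) * u i ^ (\<sigma> (2*i-1) + \<sigma> (2*i) - 1))) =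
      (\<Sum>\<sigma>\<in>E_perms n. of_int (sign \<sigma>) * (\<Prod>i\<in>{1..n}.
        power_pair_quot (merge_vars n (u i)) (merge_vars n (v i)) (\<sigma> (2*i-1)) (\<sigma> (2*i))))"
  proof (intro sum.cong refl arg_cong2[where f = "(*)"] prod.cong)
    fix \<sigma> i assume "\<sigma> \<in> E_perms n" "i \<in> {1..n}"
    then show "of_nat (\<sigma> (2*i) - \<sigma> (2*i-1)) * u i ^ (\<sigma> (2*i-1) + \<sigma> (2*i) - 1) =
        power_pair_quot (merge_vars n (u i)) (merge_vars n (v i)) (\<sigma> (2*i-1)) (\<sigma> (2*i))"
      by (simp add: merge E_perms_def power_pair_quot_diag)
  qed
  also have "\<dots> = merge_vars n (\<Sum>\<sigma>\<in>E_perms n. of_int (sign \<sigma>) *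
      (\<Prod>i\<in>{1..n}. power_pair_quot (u i) (v i) (\<sigma> (2*i-1)) (\<sigma> (2*i))))"
    by (simp add: hom_distribs merge.hom_power_pair_quot)
  also have "\<dots> = merge_vars n ((\<Prod>i\<in>{1..n}. u i * v i) * paired_vandermonde n u v)"
    using uv by (subst sum_E_perms_power_pair_quot) auto
  also have "\<dots> = (\<Prod>i\<in>{1..n}. merge_vars n (u i) * merge_vars n (v i)) *
      paired_vandermonde n (\<lambda>i. merge_vars n (u i)) (\<lambda>i. merge_vars n (v i))"
    by (simp add: hom_distribs merge.hom_paired_vandermonde)
  also have "\<dots> = (\<Prod>i\<in>{1..n}. u i ^ 2) * paired_vandermonde n u u"
    using merge by (intro arg_cong2[where f = "(*)"] prod.cong paired_vandermonde_cong)
                   (auto simp: power2_eq_square)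
  finally show ?thesis
    by (simp add: paired_vandermonde_diag)
qed

lemma xpow_pfaffian_exponent:
  assumes "a < b"
  shows "of_int (int b - int a) * xpow i (int (2*n+1) - int a - int b) =
    xpow i 1 ^ (2*n) * (of_nat (b - a) * xpow i (-1) ^ (a + b - 1))"
proof -
  have "xpow i 1 ^ (2*n) * xpow i (-1) ^ (a + b - 1) = xpow i (int (2*n) * 1 + int (a + b - 1) * (-1))"
    by (simp add: power_xpow flip: xpow_add)
  also have "int (2*n) * 1 + int (a + b - 1) * (-1) = int (2*n+1) - int a - int b"
    using assms by (simp add: of_nat_diff)
  finally have "xpow i (int (2*n+1) - int a - int b) = xpow i 1 ^ (2*n) * xpow i (-1) ^ (a + b - 1)" ..
  moreover have "of_int (int b - int a) = (of_nat (b - a) :: laurent)"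
    using assms by (simp add: of_nat_diff)
  ultimately show ?thesis
    by (simp add: ac_simps)
qed

lemma pfaffian_poly_eq:
  "pfaffian_poly n = (\<Prod>i\<in>{1..n}. xpow i 1 ^ (2*n)) *
     (\<Sum>\<sigma>\<in>E_perms n. of_int (sign \<sigma>) * (\<Prod>i\<in>{1..n}.
        of_nat (\<sigma> (2*i) - \<sigma> (2*i-1)) * xpow i (-1) ^ (\<sigma> (2*i-1) + \<sigma> (2*i) - 1)))"
proof -
  have "Poly_Mapping.single (expvec (\<lambda>i. int (2*n+1) - int (\<sigma> (2*i-1)) - int (\<sigma> (2*i))) {1..n})
      (of_int (sign \<sigma> * (\<Prod>i\<in>{1..n}. int (\<sigma> (2*i)) - int (\<sigma> (2*i-1))))) =
    (\<Prod>i\<in>{1..n}. xpow i 1 ^ (2*n)) * (of_int (sign \<sigma>) * (\<Prod>i\<in>{1..n}.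
       of_nat (\<sigma> (2*i) - \<sigma> (2*i-1)) * xpow i (-1) ^ (\<sigma> (2*i-1) + \<sigma> (2*i) - 1)))"
    if \<sigma>: "\<sigma> \<in> E_perms n" for \<sigma>
  proof -
    have "Poly_Mapping.single (expvec (\<lambda>i. int (2*n+1) - int (\<sigma> (2*i-1)) - int (\<sigma> (2*i))) {1..n})
        (of_int (sign \<sigma> * (\<Prod>i\<in>{1..n}. int (\<sigma> (2*i)) - int (\<sigma> (2*i-1))))) =
      of_int (sign \<sigma>) * (\<Prod>i\<in>{1..n}. of_int (int (\<sigma> (2*i)) - int (\<sigma> (2*i-1))) *
        xpow i (int (2*n+1) - int (\<sigma> (2*i-1)) - int (\<sigma> (2*i))))"
      unfolding single_expvec[OF finite_atLeastAtMost]
      by (simp only: of_int_mult of_int_prod prod.distrib mult.assoc)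
    also have "\<dots> = of_int (sign \<sigma>) * (\<Prod>i\<in>{1..n}. xpow i 1 ^ (2*n) *
        (of_nat (\<sigma> (2*i) - \<sigma> (2*i-1)) * xpow i (-1) ^ (\<sigma> (2*i-1) + \<sigma> (2*i) - 1)))"
    proof (rule arg_cong2[where f = "(*)"], rule refl, rule prod.cong, rule refl)
      fix i assume "i \<in> {1..n}"
      with \<sigma> have "\<sigma> (2*i-1) < \<sigma> (2*i)"
        by (auto simp: E_perms_def)
      then show "of_int (int (\<sigma> (2*i)) - int (\<sigma> (2*i-1))) *
          xpow i (int (2*n+1) - int (\<sigma> (2*i-1)) - int (\<sigma> (2*i))) =
        xpow i 1 ^ (2*n) * (of_nat (\<sigma> (2*i) - \<sigma> (2*i-1)) * xpow i (-1) ^ (\<sigma> (2*i-1) + \<sigma> (2*i) - 1))"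
        by (rule xpow_pfaffian_exponent)
    qed
    finally show ?thesis
      by (simp add: prod.distrib ac_simps)
  qed
  then show ?thesis
    unfolding pfaffian_poly_def sum_distrib_left by (rule sum.cong[OF refl])
qed

lemma alternant_power2_mult:
  assumes "n \<ge> 1"
  shows "alternant n 1 ^ 2 * alternant n (-1) ^ 2 = pfaffian_poly n"
proof -
  define X U where "X i = xpow i 1" and "U i = xpow i (-1)" for i
  have XU: "X i * U i = 1" for i
    by (simp add: X_def U_def flip: xpow_add)
  have "alternant n 1 ^ 2 * alternant n (-1) ^ 2 =
      ((\<Prod>i\<in>{1..n}. X i) * (\<Prod>i\<in>{1..n}. U i)) ^ 2 *
      vandermonde n (\<lambda>i. X (Suc i)) ^ 2 * vandermonde n (\<lambda>i. U (Suc i)) ^ 2"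
    by (simp add: alternant_eq_vandermonde X_def U_def power_mult_distrib ac_simps)
  also have "(\<Prod>i\<in>{1..n}. X i) * (\<Prod>i\<in>{1..n}. U i) = 1"
    by (simp add: XU flip: prod.distrib)
  also have "vandermonde n (\<lambda>i. X (Suc i)) ^ 2 =
      vandermonde n (\<lambda>i. U (Suc i)) ^ 2 * (\<Prod>i\<in>{1..n}. X i) ^ (2 * (n - 1))"
    using vandermonde_power2_inverse[of "\<lambda>i. X (Suc i)" "\<lambda>i. U (Suc i)" n] XU
    by (simp add: prod.atLeast1_atMost_eq)
  also have "(\<Prod>i\<in>{1..n}. X i) ^ (2 * (n - 1)) = (\<Prod>i\<in>{1..n}. X i ^ (2*n) * U i ^ 2)"
  proof -
    have "X i ^ (2*n) * U i ^ 2 = X i ^ (2 * (n - 1))" for i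
    proof -
      have "X i ^ (2*n) = X i ^ (2 * (n - 1) + 2)"
        using assms by (cases n) simp_all
      also have "\<dots> = X i ^ (2 * (n - 1)) * X i ^ 2"
        by (rule power_add)
      finally show ?thesis
        by (simp add: mult.assoc XU flip: power_mult_distrib)
    qed
    then show ?thesis
      by (simp add: prod_power_distrib)
  qed
  finally show ?thesis
    using confluent_vandermonde[of n]
    by (simp add: pfaffian_poly_eq X_def U_def prod.distrib power_mult ac_simps)
qed

section \<open>Hyperdeterminants as values of a linear functional\<close>

definition fourier_functional :: "(int \<Rightarrow> complex) \<Rightarrow> nat \<Rightarrow> laurent \<Rightarrow> complex" where
  "fourier_functional d n P =
     (\<Sum>k\<in>Poly_Mapping.keys P. Poly_Mapping.lookup P k * (\<Prod>i\<in>{1..n}. d (Poly_Mapping.lookup k i)))"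

lemma fourier_functional_add:
  "fourier_functional d n (P + Q) = fourier_functional d n P + fourier_functional d n Q"
proof -
  define K where "K = Poly_Mapping.keys P \<union> Poly_Mapping.keys Q"
  have K: "finite K" "Poly_Mapping.keys P \<subseteq> K" "Poly_Mapping.keys Q \<subseteq> K" "Poly_Mapping.keys (P + Q) \<subseteq> K"
    using keys_add[of P Q] by (auto simp: K_def)
  have "fourier_functional d n R =
      (\<Sum>k\<in>K. Poly_Mapping.lookup R k * (\<Prod>i\<in>{1..n}. d (Poly_Mapping.lookup k i)))"
    if "Poly_Mapping.keys R \<subseteq> K" for R
    unfolding fourier_functional_def using K(1) that
    by (intro sum.mono_neutral_left) (auto simp: in_keys_iff)
  then show ?thesis
    using K by (simp add: lookup_add sum.distrib algebra_simps)
qed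

lemma fourier_functional_zero [simp]: "fourier_functional d n 0 = 0"
  by (simp add: fourier_functional_def)

lemma fourier_functional_sum:
  "fourier_functional d n (sum f A) = (\<Sum>a\<in>A. fourier_functional d n (f a))"
  by (induction A rule: infinite_finite_induct) (simp_all add: fourier_functional_add)

lemma fourier_functional_single_expvec:
  "fourier_functional d n (Poly_Mapping.single (expvec e {1..n}) c) = c * (\<Prod>i\<in>{1..n}. d (e i))"
  by (cases "c = 0") (simp_all add: fourier_functional_def lookup_expvec)

lemma fourier_functional_prod_sum:
  assumes "finite J" "\<And>j. j \<in> J \<Longrightarrow> finite (S j)"
  shows "fourier_functional d n (\<Prod>j\<in>J. \<Sum>\<tau>\<in>S j. Poly_Mapping.single (expvec (e j \<tau>) {1..n}) (c j \<tau>)) =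
         (\<Sum>\<sigma>\<in>PiE J S. (\<Prod>j\<in>J. c j (\<sigma> j)) * (\<Prod>i\<in>{1..n}. d (\<Sum>j\<in>J. e j (\<sigma> j) i)))"
  by (simp add: prod_sum_PiE assms fourier_functional_sum prod_single sum_expvec
                fourier_functional_single_expvec[simplified])

lemma alternant_powers_eq_prod:
  "alternant n 1 ^ p * alternant n (-1) ^ p = (\<Prod>j<2*p. alternant n (if j < p then 1 else -1))"
proof -
  have "(\<Prod>j<2*p. alternant n (if j < p then 1 else -1)) =
      (\<Prod>j<p. alternant n (if j < p then 1 else -1)) *
      (\<Prod>j\<in>{p..<2*p}. alternant n (if j < p then 1 else -1))"
    unfolding lessThan_double_split by (rule prod.union_disjoint) auto
  also have "\<dots> = (\<Prod>j<p. alternant n 1) * (\<Prod>j\<in>{p..<2*p}. alternant n (-1))"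
    by (intro arg_cong2[where f = "(*)"] prod.cong) auto
  finally show ?thesis
    by simp
qed

lemma toeplitz_hyperdet_eq_fourier_functional:
  "toeplitz_hyperdet p n d =
     (1 / of_nat (fact n)) * fourier_functional d n (alternant n 1 ^ p * alternant n (-1) ^ p)"
proof -
  define sg :: "nat \<Rightarrow> int" where "sg j = (if j < p then 1 else -1)" for j
  have "(\<Sum>j<2*p. sg j * x j) = (\<Sum>j<p. x j) - (\<Sum>j\<in>{p..<2*p}. x j)" for x
  proof -
    have "(\<Sum>j<2*p. sg j * x j) = (\<Sum>j<p. sg j * x j) + (\<Sum>j\<in>{p..<2*p}. sg j * x j)"
      unfolding lessThan_double_split by (rule sum.union_disjoint) auto
    also have "\<dots> = (\<Sum>j<p. x j) + (\<Sum>j\<in>{p..<2*p}. - x j)"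
      by (intro arg_cong2[where f = "(+)"] sum.cong) (auto simp: sg_def)
    finally show ?thesis
      by (simp add: sum_negf)
  qed
  then have "fourier_functional d n (\<Prod>j<2*p. alternant n (sg j)) =
      (\<Sum>\<sigma>\<in>PiE {..<2*p} (\<lambda>_. {\<tau>. \<tau> permutes {1..n}}). (\<Prod>j<2*p. of_int (sign (\<sigma> j))) *
        (\<Prod>i\<in>{1..n}. d ((\<Sum>j<p. int (\<sigma> j i)) - (\<Sum>j\<in>{p..<2*p}. int (\<sigma> j i)))))"
    unfolding alternant_def by (subst fourier_functional_prod_sum) (simp_all add: finite_permutations)
  then show ?thesis
    by (simp add: toeplitz_hyperdet_def hyperdet_def alternant_powers_eq_prod sg_def atLeast0LessThan)
qed

lemma hyperpf_eq_fourier_functional: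
  "hyperpf m n (\<lambda>idx. (\<Prod>s<m. of_int (int (idx (2 * s + 1)) - int (idx (2 * s)))) *
       d (int ((2*n+1)*m) - (\<Sum>j<2*m. int (idx j)))) =
     (1 / of_nat (fact n)) * fourier_functional d n (pfaffian_poly n ^ m)"
proof -
  define e where "e \<sigma> = (\<lambda>i. int (2*n+1) - int (\<sigma> (2*i-1)) - int (\<sigma> (2*i)))" for \<sigma> :: "nat \<Rightarrow> nat"
  define c where "c \<sigma> = sign \<sigma> * (\<Prod>i\<in>{1..n}. int (\<sigma> (2*i)) - int (\<sigma> (2*i-1)))" for \<sigma> :: "nat \<Rightarrow> nat"
  have "pfaffian_poly n ^ m =
      (\<Prod>s<m. \<Sum>\<sigma>\<in>E_perms n. Poly_Mapping.single (expvec (e \<sigma>) {1..n}) (of_int (c \<sigma>)))"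
    by (simp only: pfaffian_poly_def e_def c_def prod_constant card_lessThan)
  then have "fourier_functional d n (pfaffian_poly n ^ m) =
      (\<Sum>\<sigma>\<in>PiE {..<m} (\<lambda>_. E_perms n).
         (\<Prod>s<m. of_int (c (\<sigma> s))) * (\<Prod>i\<in>{1..n}. d (\<Sum>s<m. e (\<sigma> s) i)))"
    by (simp only: fourier_functional_prod_sum finite_E_perms finite_lessThan)
  also have "\<dots> = (\<Sum>\<sigma>\<in>PiE {..<m} (\<lambda>_. E_perms n). (\<Prod>s<m. of_int (sign (\<sigma> s))) *
      (\<Prod>i\<in>{1..n}. (\<Prod>s<m. of_int (int (\<sigma> s (2*i)) - int (\<sigma> s (2*i-1)))) *
         d (int ((2*n+1)*m) - (\<Sum>s<m. int (\<sigma> s (2*i-1)) + int (\<sigma> s (2*i))))))"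
  proof (rule sum.cong[OF refl])
    fix \<sigma> :: "nat \<Rightarrow> nat \<Rightarrow> nat"
    have "(\<Prod>s<m. of_int (c (\<sigma> s))) = (\<Prod>s<m. of_int (sign (\<sigma> s))) *
        (\<Prod>i\<in>{1..n}. \<Prod>s<m. of_int (int (\<sigma> s (2*i)) - int (\<sigma> s (2*i-1))) :: complex)"
      by (simp add: c_def prod.distrib) (rule prod.swap)
    moreover have "(\<Sum>s<m. e (\<sigma> s) i) =
        int ((2*n+1)*m) - (\<Sum>s<m. int (\<sigma> s (2*i-1)) + int (\<sigma> s (2*i)))" for i
      by (simp add: e_def sum_subtractf algebra_simps)
    ultimately show "(\<Prod>s<m. of_int (c (\<sigma> s))) * (\<Prod>i\<in>{1..n}. d (\<Sum>s<m. e (\<sigma> s) i)) =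
        (\<Prod>s<m. of_int (sign (\<sigma> s))) *
        (\<Prod>i\<in>{1..n}. (\<Prod>s<m. of_int (int (\<sigma> s (2*i)) - int (\<sigma> s (2*i-1)))) *
           d (int ((2*n+1)*m) - (\<Sum>s<m. int (\<sigma> s (2*i-1)) + int (\<sigma> s (2*i)))))"
      by (simp add: prod.distrib ac_simps)
  qed
  finally show ?thesis
    by (simp add: hyperpf_def sum_lessThan_double atLeast0LessThan)
qed

lemma toeplitz_hyperdet_eq_hyperpf:
  assumes "n \<ge> 1"
  shows "toeplitz_hyperdet (2*m) n d =
    hyperpf m n (\<lambda>idx. (\<Prod>s<m. of_int (int (idx (2 * s + 1)) - int (idx (2 * s)))) *
      d (int ((2*n+1)*m) - (\<Sum>j<2*m. int (idx j))))"
proof -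
  have "alternant n 1 ^ (2*m) * alternant n (-1) ^ (2*m) = pfaffian_poly n ^ m"
    using alternant_power2_mult[OF assms] by (simp add: power_mult flip: power_mult_distrib)
  then have "toeplitz_hyperdet (2*m) n d =
      (1 / of_nat (fact n)) * fourier_functional d n (pfaffian_poly n ^ m)"
    by (simp only: toeplitz_hyperdet_eq_fourier_functional)
  then show ?thesis
    by (simp only: hyperpf_eq_fourier_functional)
qed

lemma toeplitz_hyperdet_2_eq_pfaffian:
  assumes "n \<ge> 1"
  shows "toeplitz_hyperdet 2 n d =
    pfaffian n (\<lambda>i j. of_int (int j - int i) * d (int (2*n+1) - int i - int j))"
proof -
  have "pfaffian n (\<lambda>i j. of_int (int j - int i) * d (int (2*n+1) - int i - int j)) =
      hyperpf 1 n (\<lambda>idx. of_int (int (idx 1) - int (idx 0)) *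
        d (int (2*n+1) - int (idx 0) - int (idx 1)))"
    by (rule pfaffian_eq_hyperpf_1) (simp add: algebra_simps)
  also have "\<dots> = toeplitz_hyperdet (2*1) n d"
    unfolding toeplitz_hyperdet_eq_hyperpf[OF assms]
    by (intro arg_cong[where f = "hyperpf 1 n"] ext) (simp add: numeral_2_eq_2 diff_diff_eq)
  finally show ?thesis
    by simp
qed

theorem theorem4p2:
  fixes f :: "complex \<Rightarrow> complex" and m n :: nat
  assumes "L1_circle f" and "m \<ge> 1" and "n \<ge> 1"
  defines "d \<equiv> fourier_coeff f"
  shows "(toeplitz_hyperdet (2*m) n d =
           hyperpf m n (\<lambda>idx. (\<Prod>s<m. of_int (int (idx (2 * s + 1)) - int (idx (2 * s)))) *
              d (int ((2*n+1)*m) - (\<Sum>j<2*m. int (idx j))))) \<and>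
         (toeplitz_hyperdet 2 n d =
           pfaffian n (\<lambda>i j. of_int (int j - int i) * d (int (2*n+1) - int i - int j)))"
  using toeplitz_hyperdet_eq_hyperpf[OF \<open>n \<ge> 1\<close>] toeplitz_hyperdet_2_eq_pfaffian[OF \<open>n \<ge> 1\<close>]
  by blast

end
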